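(* Let $\mathcal{A}=\{H_1,\dots,H_m\}$ be an arrangement of hyperplanes in $\mathbb{P}^n$ and let $P_1,\dots,P_m\in\mathrm{End}(\mathbb{C}^r)$ satisfy $\sum_{j=1}^m P_j=0$ and $[P_j,P_X]=0$ for all $j$ and all edges $X$ with $\operatorname{codim}X=2$ and $X\subseteq H_j$, where $P_X=\sum_{X\subseteq H_j}P_j$. Suppose there is $H\in\mathcal{A}$ such that for every dense edge $X\subseteq H$, no eigenvalue of $P_X$ lies in $\mathbb{Z}$. Then there exist integers $k_1,\dots,k_m$ with $\sum_j k_j=0$ such that the collection $(P_1+k_1\mathbb{I}_r,\dots,P_m+k_m\mathbb{I}_r)$ has the property that for every dense edge $X$ of $\mathcal{A}$, no eigenvalue of $\sum_{X\subseteq H_j}(P_j+k_j\mathbb{I}_r)$ lies in $\mathbb{Z}_{\geq 0}$.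
   Context: $\mathbb{I}_r$ is the $r\times r$ identity matrix. An edge is a nonempty intersection of hyperplanes of $\mathcal{A}$; an edge $X$ is dense if the subarrangement of hyperplanes containing $X$ is irreducible, i.e. cannot be partitioned into two nonempty sets which, after a linear change of coordinates, are defined by linear forms in disjoint sets of coordinates (each hyperplane is a dense edge). *)

theory Defs
  imports "HOL-Analysis.Analysis"
begin

text \<open>Projective space P^n is modelled through its cone C^(n+1) = complex^'n
  (so n = CARD('n) - 1). Projective linear subsets
  correspond to linear subspaces of C^(n+1); a projective subset is nonempty
  iff its cone is not {0}; projective codimension = CARD('n) - (linear dim).\<close>

definition lform :: "complex^'n \<Rightarrow> complex^'n \<Rightarrow> complex" where
  "lform a v = (\<Sum>i\<in>UNIV. a $ i * v $ i)"

definition hyp :: "complex^'n \<Rightarrow> (complex^'n) set" where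
  "hyp a = {v. lform a v = 0}"

definition arrangement :: "nat \<Rightarrow> (nat \<Rightarrow> complex^'n) \<Rightarrow> bool" where
  "arrangement m alpha \<longleftrightarrow>
     (\<forall>j<m. alpha j \<noteq> 0) \<and>
     (\<forall>i<m. \<forall>j<m. i \<noteq> j \<longrightarrow> hyp (alpha i) \<noteq> hyp (alpha j))"

definition is_edge :: "nat \<Rightarrow> (nat \<Rightarrow> complex^'n) \<Rightarrow> (complex^'n) set \<Rightarrow> bool" where
  "is_edge m alpha X \<longleftrightarrow>
     (\<exists>S. S \<subseteq> {..<m} \<and> S \<noteq> {} \<and> X = (\<Inter>j\<in>S. hyp (alpha j))) \<and> X \<noteq> {0}"

definition codim :: "(complex^'n) set \<Rightarrow> nat" where
  "codim X = CARD('n) - vec.dim X"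

definition reducible :: "(nat \<Rightarrow> complex^'n) \<Rightarrow> nat set \<Rightarrow> bool" where
  "reducible alpha S \<longleftrightarrow>
     (\<exists>B C. B \<union> C = S \<and> B \<inter> C = {} \<and> B \<noteq> {} \<and> C \<noteq> {} \<and>
        (\<exists>(M :: complex^'n^'n) (I :: 'n set). invertible M \<and>
           (\<forall>j\<in>B. \<forall>i. i \<notin> I \<longrightarrow> (transpose M *v alpha j) $ i = 0) \<and>
           (\<forall>j\<in>C. \<forall>i. i \<in> I \<longrightarrow> (transpose M *v alpha j) $ i = 0)))"

definition hyps_containing :: "nat \<Rightarrow> (nat \<Rightarrow> complex^'n) \<Rightarrow> (complex^'n) set \<Rightarrow> nat set" where
  "hyps_containing m alpha X = {j. j < m \<and> X \<subseteq> hyp (alpha j)}"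

definition dense_edge :: "nat \<Rightarrow> (nat \<Rightarrow> complex^'n) \<Rightarrow> (complex^'n) set \<Rightarrow> bool" where
  "dense_edge m alpha X \<longleftrightarrow> is_edge m alpha X \<and> \<not> reducible alpha (hyps_containing m alpha X)"

definition eigenvalue :: "complex^'r^'r \<Rightarrow> complex \<Rightarrow> bool" where
  "eigenvalue A c \<longleftrightarrow> (\<exists>v. v \<noteq> 0 \<and> A *v v = c *s v)"

definition PX :: "nat \<Rightarrow> (nat \<Rightarrow> complex^'n) \<Rightarrow> (nat \<Rightarrow> complex^'r^'r) \<Rightarrow> (complex^'n) set \<Rightarrow> complex^'r^'r" where
  "PX m alpha P X = (\<Sum>j\<in>hyps_containing m alpha X. P j)"

end

theory Submission
  imports Defs
begin

text \<open>Let H = H_h. Shift P_h by (m - 1) N and every other P_j by -N, where the integer N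
  exceeds the sum of the entrywise norms of the P_j. For a dense edge X inside H, P_X moves
  by an integer multiple of the identity, so its eigenvalues stay non-integral. Any other
  edge lies on some hyperplane but not on H, so P_X moves by -c N with c \<ge> 1; since
  eigenvalues are bounded by the entrywise norm, they then all have negative real part.\<close>

definition entrywise_norm :: "'a::real_normed_vector^'c^'b \<Rightarrow> real" where
  "entrywise_norm A = (\<Sum>a\<in>UNIV. \<Sum>b\<in>UNIV. norm (A $ a $ b))"

lemma entrywise_norm_nonneg: "entrywise_norm A \<ge> 0"
  unfolding entrywise_norm_def by (intro sum_nonneg) simp

lemma entrywise_norm_sum_le:
  "entrywise_norm (\<Sum>j\<in>S. P j) \<le> (\<Sum>j\<in>S. entrywise_norm (P j))"
proof -
  have "entrywise_norm (\<Sum>j\<in>S. P j) \<le> (\<Sum>a\<in>UNIV. \<Sum>b\<in>UNIV. \<Sum>j\<in>S. norm (P j $ a $ b))"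
    unfolding entrywise_norm_def by (intro sum_mono) (simp add: norm_sum)
  also have "\<dots> = (\<Sum>a\<in>UNIV. \<Sum>j\<in>S. \<Sum>b\<in>UNIV. norm (P j $ a $ b))"
    by (intro sum.cong refl) (rule sum.swap)
  also have "\<dots> = (\<Sum>j\<in>S. entrywise_norm (P j))"
    unfolding entrywise_norm_def by (rule sum.swap)
  finally show ?thesis .
qed

lemma norm_eigenvalue_le_entrywise_norm:
  fixes A :: "'a::real_normed_field^'n^'n"
  assumes "v \<noteq> 0" and "A *v v = c *s v"
  shows "norm c \<le> entrywise_norm A"
proof -
  obtain a where a_max: "\<And>i. norm (v $ i) \<le> norm (v $ a)"
    using Max_in[of "range (\<lambda>i. norm (v $ i))"] Max_ge[of "range (\<lambda>i. norm (v $ i))"] by fastforce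
  obtain i where "v $ i \<noteq> 0"
    using assms(1) by (auto simp: vec_eq_iff)
  then have pos: "norm (v $ a) > 0"
    using a_max[of i] by auto
  have "c * v $ a = (\<Sum>b\<in>UNIV. A $ a $ b * v $ b)"
    using arg_cong[OF assms(2), of "\<lambda>w. w $ a"] by (simp add: matrix_vector_mult_def)
  then have "norm c * norm (v $ a) = norm (\<Sum>b\<in>UNIV. A $ a $ b * v $ b)"
    by (simp add: norm_mult[symmetric])
  also have "\<dots> \<le> (\<Sum>b\<in>UNIV. norm (A $ a $ b) * norm (v $ b))"
    by (rule order_trans[OF norm_sum]) (simp add: norm_mult)
  also have "\<dots> \<le> (\<Sum>b\<in>UNIV. norm (A $ a $ b)) * norm (v $ a)"
    unfolding sum_distrib_right by (intro sum_mono mult_left_mono a_max) simp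
  finally have "norm c \<le> (\<Sum>b\<in>UNIV. norm (A $ a $ b))"
    using pos by (rule mult_right_le_imp_le)
  also have "\<dots> \<le> entrywise_norm A"
    unfolding entrywise_norm_def by (rule member_le_sum) (auto intro: sum_nonneg)
  finally show ?thesis .
qed

text \<open>In \<open>of_int k *s mat 1\<close> the scalar has the row type, so it is the constant
  vector \<open>of_int k\<close> rather than a number.\<close>

lemma of_int_index: "(of_int k :: 'a::ring_1^'n) $ i = of_int k"
  by (cases k) (simp_all add: of_nat_index)

lemma of_int_scalar_mat_mult: "((of_int k :: 'a::comm_ring_1^'n) *s mat 1) *v v = of_int k *s v"
  by (simp add: vec_eq_iff matrix_vector_mult_def mat_def of_int_index if_distrib[of "\<lambda>x. _ * x"]
      if_distrib[of "\<lambda>x. x * _"] cong: if_cong)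

lemma eigenvalue_add_of_int_iff:
  "eigenvalue (A + of_int k *s mat 1) \<mu> \<longleftrightarrow> eigenvalue A (\<mu> - of_int k)"
  unfolding eigenvalue_def
  by (simp add: matrix_vector_mult_add_rdistrib of_int_scalar_mat_mult vector_sub_rdistrib eq_diff_eq)

lemma Re_eigenvalue_neg_if_shift_dominates:
  assumes "entrywise_norm A < - of_int k" and "eigenvalue (A + of_int k *s mat 1) \<mu>"
  shows "Re \<mu> < 0"
proof -
  have "eigenvalue A (\<mu> - of_int k)"
    using assms(2) by (simp only: eigenvalue_add_of_int_iff)
  then obtain v where v: "v \<noteq> 0" "A *v v = (\<mu> - of_int k) *s v"
    unfolding eigenvalue_def by blast
  have "Re \<mu> - of_int k = Re (\<mu> - of_int k)"
    by simp
  also have "\<dots> \<le> cmod (\<mu> - of_int k)"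
    by (rule complex_Re_le_cmod)
  also have "\<dots> \<le> entrywise_norm A"
    using v by (rule norm_eigenvalue_le_entrywise_norm)
  finally show ?thesis
    using assms(1) by linarith
qed

lemma sum_add_scalar_mat:
  fixes P :: "'i \<Rightarrow> 'a::comm_ring_1^'n^'n"
  shows "(\<Sum>j\<in>S. P j + c j *s mat 1) = (\<Sum>j\<in>S. P j) + (\<Sum>j\<in>S. c j) *s mat 1"
  by (simp add: sum.distrib vec_eq_iff sum_distrib_right)

lemma PX_add_scalar_mat:
  "PX m alpha (\<lambda>j. P j + of_int (k j) *s mat 1) X
     = PX m alpha P X + of_int (\<Sum>j\<in>hyps_containing m alpha X. k j) *s mat 1"
  unfolding PX_def by (simp add: sum_add_scalar_mat)

lemma entrywise_norm_PX_le:
  "entrywise_norm (PX m alpha P X) \<le> (\<Sum>j<m. entrywise_norm (P j))"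
proof -
  have "entrywise_norm (PX m alpha P X) \<le> (\<Sum>j\<in>hyps_containing m alpha X. entrywise_norm (P j))"
    unfolding PX_def by (rule entrywise_norm_sum_le)
  also have "\<dots> \<le> (\<Sum>j<m. entrywise_norm (P j))"
    by (rule sum_mono2) (auto simp: hyps_containing_def entrywise_norm_nonneg)
  finally show ?thesis .
qed

lemma not_Ints_eigenvalue_add_of_int:
  assumes "\<And>\<mu>. eigenvalue A \<mu> \<Longrightarrow> \<mu> \<notin> \<int>" and "eigenvalue (A + of_int k *s mat 1) c"
  shows "c \<notin> \<int>"
proof
  assume "c \<in> \<int>"
  then have "c - of_int k \<in> \<int>"
    by (intro Ints_diff Ints_of_int)
  moreover have "eigenvalue A (c - of_int k)"
    using assms(2) by (simp only: eigenvalue_add_of_int_iff)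
  ultimately show False
    using assms(1) by blast
qed

lemma nonneg_int_set_eq_Nats: "{of_nat q | q :: nat. True} = \<nat>"
  unfolding Nats_def by auto

lemma not_Nats_if_Re_neg:
  assumes "Re c < 0"
  shows "c \<notin> \<nat>"
proof
  assume "c \<in> \<nat>"
  then obtain q where "c = of_nat q"
    by (rule Nats_cases)
  with assms show False
    by simp
qed

lemma finite_hyps_containing: "finite (hyps_containing m alpha X)"
  unfolding hyps_containing_def by simp

lemma hyps_containing_edge_nonempty:
  assumes "is_edge m alpha X"
  shows "hyps_containing m alpha X \<noteq> {}"
proof -
  obtain S where "S \<subseteq> {..<m}" "S \<noteq> {}" "X = (\<Inter>j\<in>S. hyp (alpha j))"
    using assms unfolding is_edge_def by blast
  then show ?thesis
    unfolding hyps_containing_def by auto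
qed

definition concentrated_shift :: "nat \<Rightarrow> nat \<Rightarrow> int \<Rightarrow> nat \<Rightarrow> int" where
  "concentrated_shift m h N j = (if j = h then int (m - 1) * N else - N)"

lemma sum_concentrated_shift:
  assumes "h < m"
  shows "(\<Sum>j<m. concentrated_shift m h N j) = 0"
  using assms by (simp add: concentrated_shift_def sum.If_cases Diff_eq[symmetric])

lemma sum_concentrated_shift_off_hyperplane_le:
  fixes N :: int
  assumes "is_edge m alpha X" and "\<not> X \<subseteq> hyp (alpha h)" and "N \<ge> 0"
  shows "(\<Sum>j\<in>hyps_containing m alpha X. concentrated_shift m h N j) \<le> - N"
proof -
  let ?S = "hyps_containing m alpha X"
  have "h \<notin> ?S"
    using assms(2) by (simp add: hyps_containing_def)
  then have "(\<Sum>j\<in>?S. concentrated_shift m h N j) = (\<Sum>j\<in>?S. - N)"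
    by (intro sum.cong) (auto simp: concentrated_shift_def)
  moreover have "card ?S \<ge> 1"
    using hyps_containing_edge_nonempty[OF assms(1)] finite_hyps_containing[of m alpha X]
    by (simp add: Suc_le_eq card_gt_0_iff)
  ultimately show ?thesis
    using assms(3) by (simp add: mult_le_cancel_right1)
qed

lemma PX_concentrated_shift_no_Nats_eigenvalue:
  fixes P :: "nat \<Rightarrow> complex^'r^'r"
  assumes nonres_h: "\<And>X c. dense_edge m alpha X \<Longrightarrow> X \<subseteq> hyp (alpha h) \<Longrightarrow>
      eigenvalue (PX m alpha P X) c \<Longrightarrow> c \<notin> \<int>"
    and N_bound: "(\<Sum>j<m. entrywise_norm (P j)) < of_int N"
    and dense: "dense_edge m alpha X"
    and eig: "eigenvalue (PX m alpha (\<lambda>j. P j + of_int (concentrated_shift m h N j) *s mat 1) X) c"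
  shows "c \<notin> \<nat>"
proof (cases "X \<subseteq> hyp (alpha h)")
  case True
  have "c \<notin> \<int>"
    using nonres_h[OF dense True] eig unfolding PX_add_scalar_mat
    by (rule not_Ints_eigenvalue_add_of_int)
  then show ?thesis
    by (rule contra_subsetD[OF Nats_subset_Ints])
next
  case False
  let ?K = "\<Sum>j\<in>hyps_containing m alpha X. concentrated_shift m h N j"
  have "0 \<le> (\<Sum>j<m. entrywise_norm (P j))"
    by (simp add: sum_nonneg entrywise_norm_nonneg)
  with N_bound have "N \<ge> 0"
    by linarith
  moreover have "is_edge m alpha X"
    using dense unfolding dense_edge_def by blast
  ultimately have "?K \<le> - N"
    using False by (intro sum_concentrated_shift_off_hyperplane_le)
  then have "entrywise_norm (PX m alpha P X) < - of_int ?K"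
    using entrywise_norm_PX_le[of m alpha P X] N_bound by linarith
  then have "Re c < 0"
    using eig unfolding PX_add_scalar_mat by (rule Re_eigenvalue_neg_if_shift_dominates)
  then show ?thesis
    by (rule not_Nats_if_Re_neg)
qed

theorem proposition4p1:
  fixes m :: nat
    and alpha :: "nat \<Rightarrow> complex^'n"
    and P :: "nat \<Rightarrow> complex^'r^'r"
  assumes arr: "arrangement m alpha"
    and sum0: "(\<Sum>j<m. P j) = 0"
    and comm: "\<And>j X. j < m \<Longrightarrow> is_edge m alpha X \<Longrightarrow> codim X = 2 \<Longrightarrow> X \<subseteq> hyp (alpha j) \<Longrightarrow>
                 P j ** PX m alpha P X = PX m alpha P X ** P j"
    and nonres: "\<exists>h<m. \<forall>X. dense_edge m alpha X \<and> X \<subseteq> hyp (alpha h) \<longrightarrow>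
                 (\<forall>c. eigenvalue (PX m alpha P X) c \<longrightarrow> c \<notin> \<int>)"
  shows "\<exists>k :: nat \<Rightarrow> int. (\<Sum>j<m. k j) = 0 \<and>
           (\<forall>X. dense_edge m alpha X \<longrightarrow>
              (\<forall>c. eigenvalue (PX m alpha (\<lambda>j. P j + of_int (k j) *s mat 1) X) c \<longrightarrow>
                   c \<notin> {of_nat q | q :: nat. True}))"
proof -
  obtain h where "h < m" and nonres_h: "\<And>X c. dense_edge m alpha X \<Longrightarrow> X \<subseteq> hyp (alpha h) \<Longrightarrow>
      eigenvalue (PX m alpha P X) c \<Longrightarrow> c \<notin> \<int>"
    using nonres by blast
  define N :: int where "N = \<lceil>\<Sum>j<m. entrywise_norm (P j)\<rceil> + 1"
  have N_bound: "(\<Sum>j<m. entrywise_norm (P j)) < of_int N"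
    using le_of_int_ceiling[of "\<Sum>j<m. entrywise_norm (P j)"] unfolding N_def by linarith
  have "c \<notin> \<nat>"
    if "dense_edge m alpha X"
      and "eigenvalue (PX m alpha (\<lambda>j. P j + of_int (concentrated_shift m h N j) *s mat 1) X) c"
    for X c
    using nonres_h N_bound that by (rule PX_concentrated_shift_no_Nats_eigenvalue)
  with sum_concentrated_shift[OF \<open>h < m\<close>] show ?thesis
    unfolding nonneg_int_set_eq_Nats by blast
qed

end
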